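(* Let $\ell$ be an odd prime and suppose that $|S^2(\ell,T)|=o(T)$ as $T\to\infty$. Then $$|\{1\le n\le X: \Phi_\ell(n)\text{ is square-free}\}|\sim C X \quad\text{as } X\to\infty,$$ where $C=\prod_p\left(1-\frac{\delta(p^2)}{p^2}\right)$ (product over all primes $p$) and $\delta(N)=|\{a \bmod N: \Phi_\ell(a)\equiv 0 \pmod N\}|$.
   Context: $\Phi_\ell(X)$ denotes the $\ell$-th cyclotomic polynomial. For a natural number $n$, $R_\ell(n):=\min\{d\in\mathbb{N}: n\mid \Phi_\ell(d)\}$ if such $d$ exists, and $R_\ell(n)=\infty$ otherwise. $\mathbb{P}$ denotes the set of primes $p$ that divide $\Phi_\ell(d)$ for some $d\in\mathbb{N}$. For real $T$, $S^2(\ell,T):=\{p\in\mathbb{P}: R_\ell(p^2)\le T\}$. *)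

theory Defs
  imports "HOL-Analysis.Analysis" "HOL-Computational_Algebra.Computational_Algebra"
    "HOL-Library.Landau_Symbols" "HOL-Library.Extended_Nat"
begin

definition cyclo_poly :: "nat \<Rightarrow> complex poly" where
  "cyclo_poly n = (\<Prod>k\<in>{k. 1 \<le> k \<and> k \<le> n \<and> coprime k n}.
      [:- cis (2 * pi * real k / real n), 1:])"

text \<open>Its value at an integer argument; it has integer coefficients, so this is an integer.\<close>
definition Phi :: "nat \<Rightarrow> int \<Rightarrow> int" where
  "Phi n d = (THE m::int. complex_of_int m = poly (cyclo_poly n) (complex_of_int d))"

definition R :: "nat \<Rightarrow> nat \<Rightarrow> enat" where
  "R l n = (if \<exists>d::nat. d \<ge> 1 \<and> int n dvd Phi l (int d)
            then enat (LEAST d::nat. d \<ge> 1 \<and> int n dvd Phi l (int d)) else \<infinity>)"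

definition PP :: "nat \<Rightarrow> nat set" where
  "PP l = {p. prime p \<and> (\<exists>d::nat. d \<ge> 1 \<and> int p dvd Phi l (int d))}"

definition S2 :: "nat \<Rightarrow> real \<Rightarrow> nat set" where
  "S2 l T = {p \<in> PP l. (case R l (p^2) of enat d \<Rightarrow> real d \<le> T | \<infinity> \<Rightarrow> False)}"

definition delta :: "nat \<Rightarrow> nat \<Rightarrow> nat" where
  "delta l N = card {a \<in> {0..<N}. int N dvd Phi l (int a)}"

end

(* For prime l we have Phi_l(n) = 1 + n + ... + n^(l-1) >= 1.  Whether p^2 divides Phi_l(n) depends
   only on n mod p^2, so by the Chinese remainder theorem the n <= N with p^2 not dividing Phi_l(n)
   for all primes p <= xi have density prod_{p <= xi} (1 - delta(p^2)/p^2).  By Hensel's lemma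
   delta(p^2) <= l^2, so these local factors form a convergent product with nonzero value.  A prime
   p > xi with p^2 | Phi_l(n) for some n <= N lies in S^2(l,N) and accounts for at most
   l^2 (N/p^2 + 1) such n, so the n <= N that pass the sieve but have Phi_l(n) not square-free number
   at most l^2 (N/xi + |S^2(l,N)|) = l^2 N/xi + o(N).  Let N and then xi tend to infinity. *)

theory Submission
  imports Defs "HOL-Number_Theory.Number_Theory"
begin

subsection \<open>The cyclotomic polynomial of prime index\<close>

lemma prod_roots_of_unity_poly:
  assumes "n > 0"
  shows "(\<Prod>k<n. [:- cis (2 * pi * real k / real n), 1:]) = Polynomial.monom 1 n - (1 :: complex poly)"
    (is "?Q = _")
proof (rule poly_eqI_degree_lead_coeff[of _ n _ "{w. w ^ n = 1}"])
  have "degree ?Q = n" by (subst degree_prod_eq_sum_degree) auto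
  moreover have "lead_coeff ?Q = 1" by (subst lead_coeff_prod) auto
  ultimately show "Polynomial.coeff ?Q n = Polynomial.coeff (Polynomial.monom 1 n - 1) n" "degree ?Q \<le> n"
    using assms by simp_all
  show "n \<le> card {w::complex. w ^ n = 1}" using card_roots_unity_eq assms by simp
  show "degree (Polynomial.monom 1 n - 1 :: complex poly) \<le> n"
    by (metis degree_diff_le degree_monom_le degree_1 le0)
  fix w :: complex assume w: "w \<in> {w. w ^ n = 1}"
  then obtain k where "k < n" "w = cis (2 * pi * real k / real n)"
    using Complex.bij_betw_roots_unity[OF assms] unfolding bij_betw_def by auto
  then have "poly ?Q w = 0" by (auto simp: poly_prod)
  then show "poly ?Q w = poly (Polynomial.monom 1 n - 1) w" using w by (simp add: poly_monom)
qed

lemma cyclo_poly_prime: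
  assumes "prime l"
  shows "cyclo_poly l = (\<Sum>j<l. Polynomial.monom 1 j)"
proof -
  have l: "l > 0" using assms prime_gt_0_nat by blast
  have "coprime k l" if "1 \<le> k" "k < l" for k
  proof -
    have "\<not> l dvd k" using that by (auto dest: dvd_imp_le)
    then show ?thesis using assms prime_imp_coprime coprime_commute by blast
  qed
  moreover have "k \<noteq> l" if "coprime k l" for k using that assms by auto
  ultimately have "{k. 1 \<le> k \<and> k \<le> l \<and> coprime k l} = {1..<l}" by fastforce
  then have "cyclo_poly l = (\<Prod>k\<in>{1..<l}. [:- cis (2 * pi * real k / real l), 1:])"
    unfolding cyclo_poly_def by simp
  moreover have "{..<l} = insert 0 {1..<l}" using l by auto
  ultimately have "[:-1, 1:] * cyclo_poly l = Polynomial.monom 1 l - 1"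
    using prod_roots_of_unity_poly[OF l] by simp
  also have "\<dots> = [:-1, 1:] * (\<Sum>j<l. Polynomial.monom 1 j)"
    by (subst poly_eq_poly_eq_iff [symmetric]) (simp add: fun_eq_iff poly_sum poly_monom power_diff_1_eq algebra_simps)
  finally show ?thesis by (rule mult_left_cancel[THEN iffD1, rotated]) simp
qed

lemma Phi_prime:
  assumes "prime l"
  shows "Phi l d = (\<Sum>j<l. d ^ j)"
proof -
  have eval_int: "complex_of_int (\<Sum>j<l. d ^ j) = poly (cyclo_poly l) (of_int d)"
    using assms by (simp add: cyclo_poly_prime poly_sum poly_monom)
  show ?thesis unfolding Phi_def
    by (rule the_equality) (use eval_int of_int_eq_iff in metis)+
qed

lemma Phi_prime_cong:
  assumes "prime l" "[a = b] (mod m)"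
  shows "[Phi l a = Phi l b] (mod m)"
  unfolding Phi_prime[OF assms(1)] by (intro cong_sum cong_pow assms(2))

lemma Phi_prime_ge_1:
  assumes "prime l" "d \<ge> 0"
  shows "Phi l d \<ge> 1"
proof -
  have "{..<l} = insert 0 {1..<l}" using assms prime_gt_0_nat by auto
  then show ?thesis using assms by (simp add: Phi_prime sum_nonneg)
qed

lemma Phi_prime_0: "prime l \<Longrightarrow> Phi l 0 = 1"
  by (simp add: Phi_prime power_0_left prime_gt_0_nat)

lemma Phi_prime_mult: "prime l \<Longrightarrow> (d - 1) * Phi l d = d ^ l - 1"
  by (simp add: Phi_prime power_diff_1_eq)

subsection \<open>Roots of the cyclotomic polynomial modulo prime squares\<close>

lemma power_add_first_order:
  fixes a x :: int
  shows "\<exists>r. (a + x) ^ n = a ^ n + of_nat n * a ^ (n - 1) * x + x\<^sup>2 * r"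
proof (induction n)
  case 0
  show ?case by simp
next
  case (Suc n)
  then obtain r where "(a + x) ^ n = a ^ n + of_nat n * a ^ (n - 1) * x + x\<^sup>2 * r" by blast
  then have "(a + x) ^ Suc n = (a + x) * (a ^ n + of_nat n * a ^ (n - 1) * x + x\<^sup>2 * r)" by simp
  also have "\<dots> = a ^ Suc n + of_nat (Suc n) * a ^ n * x + x\<^sup>2 * (a * r + of_nat n * a ^ (n - 1) + x * r)"
    by (cases n) (simp_all add: algebra_simps power2_eq_square)
  finally show ?case by auto
qed

(* Uniqueness in Hensel's lemma for X^l - 1, whose derivative l X^(l-1) is a unit modulo p at any root. *)
lemma cong_square_if_cong_roots_of_unity:
  fixes p a b :: int
  assumes p: "prime p" and pl: "\<not> p dvd int l" and ab: "[a = b] (mod p)"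
    and a: "[a ^ l = 1] (mod p\<^sup>2)" and b: "[b ^ l = 1] (mod p\<^sup>2)"
  shows "[a = b] (mod p\<^sup>2)"
proof -
  obtain t where t: "b = a + p * t"
    using ab unfolding cong_iff_dvd_diff by (metis add.commute cong_iff_dvd_diff cong_sym dvdE diff_add_cancel)
  obtain r where r: "b ^ l = a ^ l + of_nat l * a ^ (l - 1) * (p * t) + (p * t)\<^sup>2 * r"
    using power_add_first_order t by blast
  have "p\<^sup>2 dvd b ^ l - a ^ l" using a b by (metis cong_iff_dvd_diff cong_sym cong_trans)
  then have "p\<^sup>2 dvd p * (of_nat l * a ^ (l - 1) * t) + p\<^sup>2 * (t\<^sup>2 * r)"
    by (simp add: r algebra_simps power2_eq_square)
  then have "p * p dvd p * (of_nat l * a ^ (l - 1) * t)"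
    by (simp add: dvd_add_left_iff power2_eq_square)
  then have lin: "p dvd of_nat l * a ^ (l - 1) * t" using p by (simp add: prime_gt_0_int)
  have "\<not> p dvd a"
  proof
    assume "p dvd a"
    then have "p dvd a ^ l" using pl by (cases l) auto
    moreover have "[a ^ l = 1] (mod p)" using a by (rule cong_dvd_modulus) simp
    ultimately show False using p by (metis cong_dvd_iff not_prime_unit)
  qed
  then have "\<not> p dvd of_nat l * a ^ (l - 1)" using p pl by (metis prime_dvd_mult_iff prime_dvd_power)
  then have "p dvd t" using lin p by (simp add: prime_dvd_mult_iff)
  then show ?thesis using t by (simp add: cong_iff_dvd_diff power2_eq_square)
qed

lemma delta_prime_square_le:
  assumes l: "prime l" and p: "prime p"
  shows "delta l (p\<^sup>2) \<le> l\<^sup>2"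
proof (cases "p = l")
  case True
  have "delta l (p\<^sup>2) \<le> card {0..<p\<^sup>2}" unfolding delta_def by (intro card_mono) auto
  then show ?thesis using True by simp
next
  case False
  then have pl: "\<not> int p dvd int l" using l p primes_dvd_imp_eq by auto
  define D where "D = {a \<in> {0..<p\<^sup>2}. int (p\<^sup>2) dvd Phi l (int a)}"
  have root: "[int a ^ l = 1] (mod int p ^ 2)" if "a \<in> D" for a
  proof -
    have "int p ^ 2 dvd (int a - 1) * Phi l (int a)" using that by (simp add: D_def)
    then show ?thesis by (simp add: Phi_prime_mult[OF l] cong_iff_dvd_diff)
  qed
  have inj: "inj_on (\<lambda>a. a mod p) D"
  proof
    fix a b assume a: "a \<in> D" and b: "b \<in> D" and "a mod p = b mod p"
    then have "[int a = int b] (mod int p)" by (metis cong_def cong_int_iff)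
    then have "[int a = int b] (mod int p ^ 2)"
      using cong_square_if_cong_roots_of_unity[OF _ pl _ root[OF a] root[OF b]] p by simp
    then show "a = b" using a b unfolding D_def by (simp add: cong_def flip: of_nat_power cong_int_iff)
  qed
  have image: "(\<lambda>a. a mod p) ` D \<subseteq> {x\<in>{..<p}. [x ^ l = 1] (mod p)}"
  proof safe
    fix a assume a: "a \<in> D"
    show "a mod p < p" using p prime_gt_0_nat by auto
    have "[int a ^ l = 1] (mod int p)" using root[OF a] by (rule cong_dvd_modulus) simp
    then have "[a ^ l = 1] (mod p)" by (metis cong_int_iff of_nat_power of_nat_1)
    then show "[(a mod p) ^ l = 1] (mod p)" by (simp add: cong_def power_mod)
  qed
  have "card D = card ((\<lambda>a. a mod p) ` D)" using inj by (simp add: card_image)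
  also have "\<dots> \<le> card {x\<in>{..<p}. [x ^ l = 1] (mod p)}" by (intro card_mono image) auto
  also have "\<dots> \<le> l" using p l by (intro roots_mod_prime_bound) (auto simp: prime_gt_0_nat)
  also have "\<dots> \<le> l\<^sup>2" by (simp add: power2_eq_square)
  finally show ?thesis by (simp add: delta_def D_def)
qed

lemma delta_prime_square_less:
  assumes l: "prime l" and p: "prime p"
  shows "delta l (p\<^sup>2) < p\<^sup>2"
proof -
  have "p\<^sup>2 \<ge> 2\<^sup>2" using p by (intro power_mono prime_ge_2_nat) auto
  then have p2: "p\<^sup>2 > 1" by simp
  have "\<not> int (p\<^sup>2) dvd Phi l 0"
    using prime_gt_1_nat[OF p] by (simp add: Phi_prime_0[OF l] flip: of_nat_power)
  then have "{a \<in> {0..<p\<^sup>2}. int (p\<^sup>2) dvd Phi l (int a)} \<subseteq> {0..<p\<^sup>2} - {0}" by auto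
  then have "delta l (p\<^sup>2) \<le> card ({0..<p\<^sup>2} - {0})" unfolding delta_def by (intro card_mono) auto
  also have "\<dots> = p\<^sup>2 - 1" using prime_gt_0_nat[OF p] by (subst card_Diff_singleton) auto
  finally show ?thesis using p2 by simp
qed

subsection \<open>Densities of periodic sets\<close>

lemma card_periodic_multiple:
  fixes P :: "nat \<Rightarrow> bool"
  assumes periodic: "\<And>a. P a = P (a mod M)"
  shows "card {a\<in>{..<q * M}. P a} = q * card {a\<in>{..<M}. P a}"
proof -
  define f where "f a = (of_bool (P a) :: nat)" for a
  have card_sum: "card {a\<in>A. P a} = sum f A" if "finite A" for A
    using that by (simp add: f_def Int_def)
  have block: "(\<Sum>a\<in>{m * M..<m * M + M}. f a) = sum f {..<M}" for m
  proof -
    have "(\<Sum>a\<in>{m * M..<m * M + M}. f a) = (\<Sum>a<M. f (a + m * M))"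
      using sum.shift_bounds_nat_ivl[of f 0 "m * M" M] by (simp add: atLeast0LessThan add.commute)
    also have "\<dots> = sum f {..<M}"
    proof (rule sum.cong)
      show "f (a + m * M) = f a" for a
        using periodic[of "a + m * M"] periodic[of a] by (simp add: f_def)
    qed simp
    finally show ?thesis .
  qed
  have "card {a\<in>{..<q * M}. P a} = sum f {..<q * M}" by (rule card_sum) simp
  also have "\<dots> = (\<Sum>m<q. \<Sum>a\<in>{m * M..<m * M + M}. f a)" by (rule sum.nat_group [symmetric])
  also have "\<dots> = q * sum f {..<M}" by (simp add: block)
  also have "\<dots> = q * card {a\<in>{..<M}. P a}" using card_sum[of "{..<M}"] by simp
  finally show ?thesis .
qed

lemma card_periodic_deviation:
  fixes P :: "nat \<Rightarrow> bool"
  assumes M: "M > 0" and periodic: "\<And>a. P a = P (a mod M)"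
  defines "K \<equiv> card {a\<in>{..<M}. P a}"
  shows "\<bar>real (card {a\<in>{..<N}. P a}) - real K / real M * real N\<bar> \<le> real K"
proof -
  define q where "q = N div M"
  have N: "q * M \<le> N" "N < Suc q * M"
    using dividend_less_div_times[OF M, of N] by (simp_all add: q_def)
  have "q * K = card {a\<in>{..<q * M}. P a}"
    unfolding K_def by (rule card_periodic_multiple[of P M, OF periodic, symmetric])
  also have "\<dots> \<le> card {a\<in>{..<N}. P a}" using N(1) by (intro card_mono) auto
  finally have lower: "real q * real K \<le> real (card {a\<in>{..<N}. P a})"
    by (simp flip: of_nat_mult)
  have "card {a\<in>{..<N}. P a} \<le> card {a\<in>{..<Suc q * M}. P a}" using N(2) by (intro card_mono) auto
  also have "\<dots> = Suc q * K" unfolding K_def by (rule card_periodic_multiple[of P M, OF periodic])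
  finally have upper: "real (card {a\<in>{..<N}. P a}) \<le> (real q + 1) * real K"
    by (simp add: algebra_simps flip: of_nat_mult)
  have "real q * real M \<le> real N" "real N \<le> (real q + 1) * real M"
    using N by (simp_all add: algebra_simps flip: of_nat_mult of_nat_le_iff)
  then have "real K * (real q * real M) \<le> real K * real N" "real K * real N \<le> real K * ((real q + 1) * real M)"
    by (simp_all add: mult_left_mono)
  then have "real q * real K \<le> real K / real M * real N" "real K / real M * real N \<le> (real q + 1) * real K"
    using M by (simp_all add: field_simps)
  with lower upper show ?thesis by (simp add: abs_le_iff algebra_simps)
qed

lemma bounded_deviation_density:
  fixes u :: "nat \<Rightarrow> real"
  assumes "\<And>N. \<bar>u N - c * real N\<bar> \<le> B"
  shows "(\<lambda>N. u N / real N) \<longlonglongrightarrow> c"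
proof -
  have "(\<lambda>N. (u N - c * real N) / real N) \<longlonglongrightarrow> 0"
  proof (rule Lim_null_comparison)
    show "\<forall>\<^sub>F N in sequentially. norm ((u N - c * real N) / real N) \<le> B / real N"
      using assms by (intro always_eventually allI) (simp add: divide_right_mono)
  qed (rule lim_const_over_n)
  then have "(\<lambda>N. c + (u N - c * real N) / real N) \<longlonglongrightarrow> c"
    using tendsto_add[OF tendsto_const[of c]] by fastforce
  moreover have "\<forall>\<^sub>F N in sequentially. c + (u N - c * real N) / real N = u N / real N"
    using eventually_gt_at_top[of 0] by eventually_elim (simp add: field_simps)
  ultimately show ?thesis by (rule Lim_transform_eventually)
qed

lemma density_periodic:
  fixes P :: "nat \<Rightarrow> bool"
  assumes M: "M > 0" and periodic: "\<And>a. P a = P (a mod M)"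
  shows "(\<lambda>N. real (card {n\<in>{1..N}. P n}) / real N) \<longlonglongrightarrow> real (card {a\<in>{..<M}. P a}) / real M"
proof (rule bounded_deviation_density)
  fix N
  define K where "K = card {a\<in>{..<M}. P a}"
  define k where "k = real K / real M"
  define count where "count = card {n\<in>{1..N}. P n}"
  define count' where "count' = card {a\<in>{..<Suc N}. P a}"
  have "count \<le> count'" unfolding count_def count'_def by (intro card_mono) auto
  moreover have "count' \<le> Suc count"
  proof -
    have "count' \<le> card (insert 0 {n\<in>{1..N}. P n})" unfolding count'_def by (intro card_mono) auto
    also have "\<dots> \<le> Suc count" unfolding count_def by (rule card_insert_le_m1) auto
    finally show ?thesis .
  qed
  moreover have "\<bar>real count' - k * real (Suc N)\<bar> \<le> real K"
    unfolding count'_def k_def K_def by (rule card_periodic_deviation[of M P, OF M periodic])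
  moreover have "0 \<le> k" "k \<le> real K"
    using M by (simp_all add: k_def divide_le_eq mult_le_cancel_left1)
  ultimately have "\<bar>real count - k * real N\<bar> \<le> 2 * real K + 1"
    by (simp add: abs_le_iff algebra_simps)
  then show "\<bar>real (card {n\<in>{1..N}. P n}) - real K / real M * real N\<bar> \<le> 2 * real K + 1"
    by (simp add: count_def k_def)
qed

subsection \<open>Sieving by the squares of small primes\<close>

lemma card_periodic_coprime_product:
  fixes P Q :: "nat \<Rightarrow> bool"
  assumes cop: "coprime m n" and m: "m > 0" and n: "n > 0"
    and P: "\<And>a. P a = P (a mod m)" and Q: "\<And>a. Q a = Q (a mod n)"
  shows "card {a\<in>{..<m * n}. P a \<and> Q a} = card {a\<in>{..<m}. P a} * card {a\<in>{..<n}. Q a}"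
proof -
  define h where "h a = (a mod m, a mod n)" for a
  have "bij_betw h {a\<in>{..<m * n}. P a \<and> Q a} ({a\<in>{..<m}. P a} \<times> {a\<in>{..<n}. Q a})"
    unfolding bij_betw_def
  proof
    show "inj_on h {a\<in>{..<m * n}. P a \<and> Q a}"
    proof
      fix x y assume "x \<in> {a\<in>{..<m * n}. P a \<and> Q a}" "y \<in> {a\<in>{..<m * n}. P a \<and> Q a}" "h x = h y"
      then have "x < m * n \<and> [x = x] (mod m) \<and> [x = x] (mod n)"
        "y < m * n \<and> [y = x] (mod m) \<and> [y = x] (mod n)"
        by (auto simp: h_def cong_def)
      then show "x = y" using binary_chinese_remainder_unique_nat[OF cop, of x x] m n by auto
    qed
    show "h ` {a\<in>{..<m * n}. P a \<and> Q a} = {a\<in>{..<m}. P a} \<times> {a\<in>{..<n}. Q a}"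
    proof (intro equalityI subsetI)
      fix y assume "y \<in> h ` {a\<in>{..<m * n}. P a \<and> Q a}"
      then show "y \<in> {a\<in>{..<m}. P a} \<times> {a\<in>{..<n}. Q a}"
        using m n P Q by (auto simp: h_def)
    next
      fix y assume "y \<in> {a\<in>{..<m}. P a} \<times> {a\<in>{..<n}. Q a}"
      then obtain a b where y: "y = (a, b)" and a: "a < m" "P a" and b: "b < n" "Q b" by blast
      obtain x where x: "x < m * n" "[x = a] (mod m)" "[x = b] (mod n)"
        using binary_chinese_remainder_unique_nat[OF cop, of a b] m n by auto
      then have "x mod m = a" "x mod n = b" using a b by (auto simp: cong_def)
      then show "y \<in> h ` {a\<in>{..<m * n}. P a \<and> Q a}"
        using x(1) y a b P[of x] Q[of x] by (auto simp: h_def intro!: image_eqI[of _ _ x])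
    qed
  qed
  then show ?thesis by (simp add: bij_betw_same_card card_cartesian_product)
qed

definition squarefree_wrt :: "nat set \<Rightarrow> int \<Rightarrow> bool" where
  "squarefree_wrt P x \<longleftrightarrow> (\<forall>p\<in>P. \<not> int (p\<^sup>2) dvd x)"

lemma squarefree_iff_squarefree_wrt_primes:
  fixes x :: int
  assumes "x \<noteq> 0"
  shows "squarefree x \<longleftrightarrow> squarefree_wrt {p. prime p} x"
proof -
  have "(\<forall>q::int. prime q \<longrightarrow> \<not> q\<^sup>2 dvd x) \<longleftrightarrow> (\<forall>p::nat. prime p \<longrightarrow> \<not> int p ^ 2 dvd x)"
  proof
    assume "\<forall>q::int. prime q \<longrightarrow> \<not> q\<^sup>2 dvd x"
    then show "\<forall>p::nat. prime p \<longrightarrow> \<not> int p ^ 2 dvd x" by simp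
  next
    assume nat_primes: "\<forall>p::nat. prime p \<longrightarrow> \<not> int p ^ 2 dvd x"
    show "\<forall>q::int. prime q \<longrightarrow> \<not> q\<^sup>2 dvd x"
    proof (intro allI impI)
      fix q :: int assume "prime q"
      then show "\<not> q\<^sup>2 dvd x" using nat_primes[rule_format, of "nat q"] by (simp add: prime_ge_0_int)
    qed
  qed
  then show ?thesis by (simp add: squarefree_factorial_semiring[OF assms] squarefree_wrt_def)
qed

lemma Phi_prime_dvd_mod:
  assumes "prime l" "m dvd M"
  shows "int m dvd Phi l (int (a mod M)) \<longleftrightarrow> int m dvd Phi l (int a)"
proof -
  have "[int (a mod M) = int a] (mod int m)"
    using assms(2) by (simp add: cong_int_iff cong_dvd_modulus_nat[of _ _ M])
  then show ?thesis using Phi_prime_cong[OF assms(1)] cong_dvd_iff by blast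
qed

lemma squarefree_wrt_Phi_mod:
  assumes "prime l" "finite P"
  shows "squarefree_wrt P (Phi l (int (a mod (\<Prod>p\<in>P. p\<^sup>2)))) = squarefree_wrt P (Phi l (int a))"
proof -
  have "int (p\<^sup>2) dvd Phi l (int (a mod (\<Prod>p\<in>P. p\<^sup>2))) \<longleftrightarrow> int (p\<^sup>2) dvd Phi l (int a)" if "p \<in> P" for p
    using that assms by (intro Phi_prime_dvd_mod) (auto intro: dvd_prodI)
  then show ?thesis unfolding squarefree_wrt_def by blast
qed

lemma card_not_dvd_Phi:
  "card {a\<in>{..<m}. \<not> int m dvd Phi l (int a)} = m - delta l m"
proof -
  define D where "D = {a \<in> {0..<m}. int m dvd Phi l (int a)}"
  have "{a\<in>{..<m}. \<not> int m dvd Phi l (int a)} = {..<m} - D" by (auto simp: D_def)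
  then have "card {a\<in>{..<m}. \<not> int m dvd Phi l (int a)} = card ({..<m} - D)" by (rule arg_cong)
  also have "\<dots> = m - card D" by (subst card_Diff_subset) (auto simp: D_def)
  finally show ?thesis unfolding delta_def D_def .
qed

lemma card_squarefree_wrt_Phi:
  assumes l: "prime l" and "finite P" "\<forall>p\<in>P. prime p"
  shows "card {a\<in>{..<\<Prod>p\<in>P. p\<^sup>2}. squarefree_wrt P (Phi l (int a))} = (\<Prod>p\<in>P. p\<^sup>2 - delta l (p\<^sup>2))"
  using assms(2,3)
proof (induction P rule: finite_induct)
  case empty
  then show ?case by (simp add: squarefree_wrt_def)
next
  case (insert q P)
  have q: "prime q" and primes: "\<forall>p\<in>P. prime p" using insert.prems by auto
  define M where "M = (\<Prod>p\<in>P. p\<^sup>2)"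
  have "coprime q p" if "p \<in> P" for p
    using that insert.hyps(2) primes q by (intro primes_coprime) auto
  then have "coprime (q\<^sup>2) M" unfolding M_def by (intro prod_coprime_right) simp
  moreover have "q\<^sup>2 > 0" using q by (simp add: prime_gt_0_nat)
  moreover have "M > 0" using primes by (simp add: M_def prime_gt_0_nat prod_pos)
  ultimately have "card {a\<in>{..<q\<^sup>2 * M}. \<not> int (q\<^sup>2) dvd Phi l (int a) \<and> squarefree_wrt P (Phi l (int a))}
      = card {a\<in>{..<q\<^sup>2}. \<not> int (q\<^sup>2) dvd Phi l (int a)}
        * card {a\<in>{..<M}. squarefree_wrt P (Phi l (int a))}"
  proof (rule card_periodic_coprime_product)
    show "(\<not> int (q\<^sup>2) dvd Phi l (int a)) = (\<not> int (q\<^sup>2) dvd Phi l (int (a mod q\<^sup>2)))" for a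
      by (simp only: Phi_prime_dvd_mod[OF l dvd_refl])
    show "squarefree_wrt P (Phi l (int a)) = squarefree_wrt P (Phi l (int (a mod M)))" for a
      unfolding M_def by (simp only: squarefree_wrt_Phi_mod[OF l insert.hyps(1)])
  qed
  moreover have "squarefree_wrt (insert q P) x \<longleftrightarrow> \<not> int (q\<^sup>2) dvd x \<and> squarefree_wrt P x" for x
    by (simp add: squarefree_wrt_def)
  ultimately show ?case using insert card_not_dvd_Phi[of "q\<^sup>2" l] by (simp add: M_def)
qed

definition local_factor :: "nat \<Rightarrow> nat \<Rightarrow> real" where
  "local_factor l p = (if prime p then 1 - real (delta l (p\<^sup>2)) / real (p\<^sup>2) else 1)"

lemma local_factor_pos:
  assumes "prime l"
  shows "local_factor l p > 0"
  using delta_prime_square_less[OF assms, of p]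
  by (simp add: local_factor_def field_simps prime_gt_0_nat flip: of_nat_power)

lemma convergent_prod_local_factor:
  assumes l: "prime l"
  shows "convergent_prod (local_factor l)"
proof -
  have "norm (norm (local_factor l p - 1)) \<le> real l ^ 2 * inverse (real p ^ 2)" for p
  proof (cases "prime p")
    case True
    then have "real (delta l (p\<^sup>2)) \<le> real l ^ 2"
      using delta_prime_square_le[OF l] by (metis of_nat_le_iff of_nat_power)
    then show ?thesis
      using True by (simp add: local_factor_def divide_inverse mult_right_mono)
  qed (simp add: local_factor_def)
  moreover have "summable (\<lambda>p. real l ^ 2 * inverse (real p ^ 2))"
    by (intro summable_mult inverse_power_summable) simp
  ultimately have "summable (\<lambda>p. norm (local_factor l p - 1))"
    by (rule summable_comparison_test'[rotated])
  then show ?thesis by (intro abs_convergent_prod_imp_convergent_prod summable_imp_abs_convergent_prod)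
qed

lemma density_squarefree_wrt_small_primes:
  assumes l: "prime l"
  shows "(\<lambda>N. real (card {n\<in>{1..N}. squarefree_wrt {p. prime p \<and> p \<le> \<xi>} (Phi l (int n))}) / real N)
    \<longlonglongrightarrow> (\<Prod>p\<le>\<xi>. local_factor l p)"
proof -
  define P where "P = {p. prime p \<and> p \<le> \<xi>}"
  define M where "M = (\<Prod>p\<in>P. p\<^sup>2)"
  have P: "finite P" "\<forall>p\<in>P. prime p" by (auto simp: P_def)
  have M: "M > 0" using P(2) by (simp add: M_def prime_gt_0_nat prod_pos)
  have "real (card {a\<in>{..<M}. squarefree_wrt P (Phi l (int a))}) / real M
      = (\<Prod>p\<in>P. real (p\<^sup>2 - delta l (p\<^sup>2)) / real (p\<^sup>2))"
    unfolding M_def card_squarefree_wrt_Phi[OF l P] by (simp add: prod_dividef)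
  also have "\<dots> = (\<Prod>p\<in>P. local_factor l p)"
  proof (rule prod.cong)
    fix p assume "p \<in> P"
    then have "prime p" by (simp add: P_def)
    then show "real (p\<^sup>2 - delta l (p\<^sup>2)) / real (p\<^sup>2) = local_factor l p"
      using delta_prime_square_less[OF l] prime_gt_0_nat
      by (simp add: local_factor_def of_nat_diff less_imp_le diff_divide_distrib)
  qed simp
  also have "\<dots> = (\<Prod>p\<le>\<xi>. local_factor l p)"
    by (intro prod.mono_neutral_left) (auto simp: P_def local_factor_def)
  finally have density: "real (card {a\<in>{..<M}. squarefree_wrt P (Phi l (int a))}) / real M
      = (\<Prod>p\<le>\<xi>. local_factor l p)" .
  show ?thesis unfolding P_def[symmetric] density[symmetric]
    by (rule density_periodic[OF M]) (simp add: M_def squarefree_wrt_Phi_mod[OF l P(1)])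
qed

subsection \<open>Divisibility by the squares of large primes\<close>

lemma card_residue_class_le:
  assumes "m > 0"
  shows "card {n\<in>{1..N}. n mod m = a} \<le> N div m + 1"
proof -
  have "inj_on (\<lambda>n. n div m) {n\<in>{1..N}. n mod m = a}"
    by (rule inj_onI) (metis (mono_tags, lifting) div_mult_mod_eq mem_Collect_eq)
  then have "card {n\<in>{1..N}. n mod m = a} = card ((\<lambda>n. n div m) ` {n\<in>{1..N}. n mod m = a})"
    by (simp add: card_image)
  also have "\<dots> \<le> card {..N div m}" by (intro card_mono) (auto intro: div_le_mono)
  finally show ?thesis by simp
qed

lemma card_dvd_Phi_le:
  assumes l: "prime l" and m: "m > 0"
  shows "real (card {n\<in>{1..N}. int m dvd Phi l (int n)}) \<le> real (delta l m) * (real N / real m + 1)"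
proof -
  define D where "D = {a \<in> {0..<m}. int m dvd Phi l (int a)}"
  have "n mod m \<in> D" if "int m dvd Phi l (int n)" for n
    using that m by (simp add: D_def Phi_prime_dvd_mod[OF l dvd_refl])
  then have "{n\<in>{1..N}. int m dvd Phi l (int n)} \<subseteq> (\<Union>a\<in>D. {n\<in>{1..N}. n mod m = a})"
    by blast
  then have "card {n\<in>{1..N}. int m dvd Phi l (int n)} \<le> card (\<Union>a\<in>D. {n\<in>{1..N}. n mod m = a})"
    by (intro card_mono) (auto simp: D_def)
  also have "\<dots> \<le> (\<Sum>a\<in>D. card {n\<in>{1..N}. n mod m = a})"
    by (rule card_UN_le) (simp add: D_def)
  also have "\<dots> \<le> (\<Sum>a\<in>D. N div m + 1)"
    by (intro sum_mono card_residue_class_le m)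
  also have "\<dots> = delta l m * (N div m + 1)" by (simp add: D_def delta_def)
  finally have "real (card {n\<in>{1..N}. int m dvd Phi l (int n)}) \<le> real (delta l m * (N div m + 1))"
    by (simp only: of_nat_le_iff)
  also have "\<dots> = real (delta l m) * (real (N div m) + 1)" by (simp add: algebra_simps)
  also have "\<dots> \<le> real (delta l m) * (real N / real m + 1)"
    by (intro mult_left_mono add_right_mono of_nat_div_le_of_nat) simp_all
  finally show ?thesis .
qed

lemma sum_inverse_squares_interval_le:
  assumes "\<xi> \<ge> 1" "K \<ge> \<xi>"
  shows "(\<Sum>n\<in>{\<xi><..K}. 1 / real n ^ 2) \<le> 1 / real \<xi> - 1 / real K"
  using assms(2)
proof (induction K rule: dec_induct)
  case base
  then show ?case by simp
next
  case (step K)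
  define k where "k = real K"
  have k: "k \<ge> 1" using step assms by (simp add: k_def)
  have "1 / (k + 1) ^ 2 \<le> 1 / (k * (k + 1))"
    using k by (intro divide_left_mono) (auto simp: power2_eq_square)
  also have "\<dots> = 1 / k - 1 / (k + 1)" using k by (simp add: field_simps)
  finally have "1 / real (Suc K) ^ 2 \<le> 1 / real K - 1 / real (Suc K)" by (simp add: k_def add.commute)
  moreover have "{\<xi><..Suc K} = insert (Suc K) {\<xi><..K}" using step by auto
  ultimately show ?case using step by simp
qed

lemma sum_inverse_squares_tail_le:
  assumes "finite S" "\<forall>n\<in>S. n > \<xi>" "\<xi> \<ge> 1"
  shows "(\<Sum>n\<in>S. 1 / real n ^ 2) \<le> 1 / real \<xi>"
proof (cases "S = {}")
  case False
  have "(\<Sum>n\<in>S. 1 / real n ^ 2) \<le> (\<Sum>n\<in>{\<xi><..Max S}. 1 / real n ^ 2)"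
    using assms by (intro sum_mono2) auto
  also have "\<dots> \<le> 1 / real \<xi> - 1 / real (Max S)"
    using assms False by (intro sum_inverse_squares_interval_le) (auto simp: less_imp_le)
  also have "\<dots> \<le> 1 / real \<xi>" by simp
  finally show ?thesis .
qed simp

lemma card_square_dvd_Phi_large_primes_le:
  assumes l: "prime l" and "finite T" and T: "\<forall>p\<in>T. prime p \<and> \<xi> < p" and "\<xi> \<ge> 1"
  shows "real (card {n\<in>{1..N}. \<exists>p\<in>T. int (p\<^sup>2) dvd Phi l (int n)})
    \<le> real l ^ 2 * (real N / real \<xi> + real (card T))"
proof -
  have "card {n\<in>{1..N}. \<exists>p\<in>T. int (p\<^sup>2) dvd Phi l (int n)}
      \<le> (\<Sum>p\<in>T. card {n\<in>{1..N}. int (p\<^sup>2) dvd Phi l (int n)})"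
  proof -
    have "{n\<in>{1..N}. \<exists>p\<in>T. int (p\<^sup>2) dvd Phi l (int n)} = (\<Union>p\<in>T. {n\<in>{1..N}. int (p\<^sup>2) dvd Phi l (int n)})"
      by auto
    then show ?thesis using \<open>finite T\<close> by (simp add: card_UN_le)
  qed
  then have "real (card {n\<in>{1..N}. \<exists>p\<in>T. int (p\<^sup>2) dvd Phi l (int n)})
      \<le> (\<Sum>p\<in>T. real (card {n\<in>{1..N}. int (p\<^sup>2) dvd Phi l (int n)}))"
    by (simp only: of_nat_le_iff flip: of_nat_sum)
  also have "\<dots> \<le> (\<Sum>p\<in>T. real l ^ 2 * (real N * (1 / real p ^ 2) + 1))"
  proof (rule sum_mono)
    fix p assume "p \<in> T"
    then have p: "prime p" using T by blast
    have "real (card {n\<in>{1..N}. int (p\<^sup>2) dvd Phi l (int n)}) \<le> real (delta l (p\<^sup>2)) * (real N / real (p\<^sup>2) + 1)"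
      using p by (intro card_dvd_Phi_le[OF l]) (simp add: prime_gt_0_nat)
    also have "\<dots> \<le> real l ^ 2 * (real N / real (p\<^sup>2) + 1)"
      using delta_prime_square_le[OF l p] by (intro mult_right_mono) (simp_all flip: of_nat_power)
    finally show "real (card {n\<in>{1..N}. int (p\<^sup>2) dvd Phi l (int n)}) \<le> real l ^ 2 * (real N * (1 / real p ^ 2) + 1)"
      by simp
  qed
  also have "\<dots> = real l ^ 2 * (real N * (\<Sum>p\<in>T. 1 / real p ^ 2) + real (card T))"
    by (simp add: sum_distrib_left sum.distrib algebra_simps)
  also have "\<dots> \<le> real l ^ 2 * (real N / real \<xi> + real (card T))"
  proof -
    have "(\<Sum>p\<in>T. 1 / real p ^ 2) \<le> 1 / real \<xi>"
      using assms by (intro sum_inverse_squares_tail_le) auto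
    then have "real N * (\<Sum>p\<in>T. 1 / real p ^ 2) \<le> real N / real \<xi>"
      using mult_left_mono[of _ _ "real N"] by fastforce
    then show ?thesis by (intro mult_left_mono add_right_mono) auto
  qed
  finally show ?thesis .
qed

lemma prime_in_S2_if_square_dvd_Phi:
  assumes l: "prime l" and p: "prime p" and n: "1 \<le> n" "real n \<le> T"
    and dvd: "int (p\<^sup>2) dvd Phi l (int n)"
  shows "p \<in> S2 l T"
proof -
  have ex: "\<exists>d::nat. d \<ge> 1 \<and> int (p\<^sup>2) dvd Phi l (int d)" using n dvd by blast
  have "(LEAST d::nat. d \<ge> 1 \<and> int (p\<^sup>2) dvd Phi l (int d)) \<le> n"
    using n dvd by (intro Least_le) simp
  then have R: "case R l (p\<^sup>2) of enat d \<Rightarrow> real d \<le> T | \<infinity> \<Rightarrow> False"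
    using ex n by (simp add: R_def)
  have "int p dvd Phi l (int n)" using dvd by (simp add: power2_eq_square dvd_mult_left)
  then have "p \<in> PP l" using n p by (auto simp: PP_def)
  then show ?thesis using R by (simp add: S2_def)
qed

lemma finite_S2:
  assumes l: "prime l"
  shows "finite (S2 l T)"
proof -
  have "S2 l T \<subseteq> (\<Union>d\<in>{1..nat \<lfloor>T\<rfloor>}. {..nat (Phi l (int d))})"
  proof
    fix p assume p: "p \<in> S2 l T"
    have ex: "\<exists>d::nat. d \<ge> 1 \<and> int (p\<^sup>2) dvd Phi l (int d)"
    proof (rule ccontr)
      assume "\<not> ?thesis"
      then have "R l (p\<^sup>2) = \<infinity>" by (simp add: R_def)
      then show False using p by (simp add: S2_def)
    qed
    define d where "d = (LEAST d::nat. d \<ge> 1 \<and> int (p\<^sup>2) dvd Phi l (int d))"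
    have d: "d \<ge> 1" "int (p\<^sup>2) dvd Phi l (int d)"
      unfolding d_def using LeastI_ex[OF ex] by auto
    have "R l (p\<^sup>2) = enat d" using ex by (simp add: R_def d_def)
    then have "d \<le> nat \<lfloor>T\<rfloor>" using p by (simp add: S2_def le_nat_floor)
    have "int (p\<^sup>2) \<le> Phi l (int d)"
      using d Phi_prime_ge_1[OF l, of "int d"] by (intro zdvd_imp_le) auto
    moreover have "p \<le> p\<^sup>2" by (simp add: power2_eq_square)
    ultimately have "p \<le> nat (Phi l (int d))" by linarith
    then show "p \<in> (\<Union>d\<in>{1..nat \<lfloor>T\<rfloor>}. {..nat (Phi l (int d))})"
      using d(1) \<open>d \<le> nat \<lfloor>T\<rfloor>\<close> by auto
  qed
  then show ?thesis by (rule finite_subset) simp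
qed

subsection \<open>Density of square-free values\<close>

definition sqfree_Phi_count :: "nat \<Rightarrow> nat \<Rightarrow> nat" where
  "sqfree_Phi_count l N = card {n\<in>{1..N}. squarefree (Phi l (int n))}"

definition sieved_Phi_count :: "nat \<Rightarrow> nat \<Rightarrow> nat \<Rightarrow> nat" where
  "sieved_Phi_count l \<xi> N = card {n\<in>{1..N}. squarefree_wrt {p. prime p \<and> p \<le> \<xi>} (Phi l (int n))}"

lemma squarefree_Phi_prime_iff:
  assumes "prime l"
  shows "squarefree (Phi l (int n)) \<longleftrightarrow> squarefree_wrt {p. prime p} (Phi l (int n))"
  using Phi_prime_ge_1[OF assms, of "int n"] by (intro squarefree_iff_squarefree_wrt_primes) simp

lemma sqfree_Phi_count_le_sieved:
  assumes "prime l"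
  shows "sqfree_Phi_count l N \<le> sieved_Phi_count l \<xi> N"
  unfolding sqfree_Phi_count_def sieved_Phi_count_def
  by (intro card_mono) (auto simp: squarefree_Phi_prime_iff[OF assms] squarefree_wrt_def)

lemma sieved_Phi_count_le:
  assumes l: "prime l" and "\<xi> \<ge> 1"
  shows "real (sieved_Phi_count l \<xi> N)
    \<le> real (sqfree_Phi_count l N) + real l ^ 2 / real \<xi> * real N + real l ^ 2 * real (card (S2 l (real N)))"
proof -
  define T where "T = {p \<in> S2 l (real N). \<xi> < p}"
  have T: "finite T" "\<forall>p\<in>T. prime p \<and> \<xi> < p"
    using finite_S2[OF l, of "real N"] by (simp_all add: T_def) (simp add: S2_def PP_def)
  define bad where "bad = {n\<in>{1..N}. \<exists>p\<in>T. int (p\<^sup>2) dvd Phi l (int n)}"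
  have "{n\<in>{1..N}. squarefree_wrt {p. prime p \<and> p \<le> \<xi>} (Phi l (int n))}
      \<subseteq> {n\<in>{1..N}. squarefree (Phi l (int n))} \<union> bad"
  proof
    fix n assume n: "n \<in> {n\<in>{1..N}. squarefree_wrt {p. prime p \<and> p \<le> \<xi>} (Phi l (int n))}"
    show "n \<in> {n\<in>{1..N}. squarefree (Phi l (int n))} \<union> bad"
    proof (cases "squarefree (Phi l (int n))")
      case False
      then obtain p where p: "prime p" "int (p\<^sup>2) dvd Phi l (int n)"
        by (auto simp: squarefree_Phi_prime_iff[OF l] squarefree_wrt_def)
      then have "\<xi> < p" using n by (auto simp: squarefree_wrt_def)
      moreover have "p \<in> S2 l (real N)" using n p by (intro prime_in_S2_if_square_dvd_Phi[OF l]) auto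
      ultimately show ?thesis using n p by (auto simp: bad_def T_def)
    qed (use n in simp)
  qed
  then have "sieved_Phi_count l \<xi> N \<le> card ({n\<in>{1..N}. squarefree (Phi l (int n))} \<union> bad)"
    unfolding sieved_Phi_count_def by (intro card_mono) (auto simp: bad_def)
  also have "\<dots> \<le> sqfree_Phi_count l N + card bad"
    unfolding sqfree_Phi_count_def by (rule card_Un_le)
  finally have "real (sieved_Phi_count l \<xi> N) \<le> real (sqfree_Phi_count l N) + real (card bad)"
    by (simp flip: of_nat_add)
  moreover have "real (card bad) \<le> real l ^ 2 * (real N / real \<xi> + real (card T))"
    unfolding bad_def using assms T by (intro card_square_dvd_Phi_large_primes_le) auto
  moreover have "real l ^ 2 * real (card T) \<le> real l ^ 2 * real (card (S2 l (real N)))"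
    unfolding T_def using finite_S2[OF l] by (intro mult_left_mono) (auto intro: card_mono)
  ultimately show ?thesis by (simp add: algebra_simps)
qed

lemma tendsto_density_by_approximation:
  fixes u r :: "nat \<Rightarrow> real" and g :: "nat \<Rightarrow> nat \<Rightarrow> real" and c e :: "nat \<Rightarrow> real"
  assumes lower: "\<And>k N. u N \<le> g k N"
    and upper: "\<And>k N. k > 0 \<Longrightarrow> g k N \<le> u N + e k * real N + r N"
    and g: "\<And>k. (\<lambda>N. g k N / real N) \<longlonglongrightarrow> c k" and c: "c \<longlonglongrightarrow> C" and e: "e \<longlonglongrightarrow> 0"
    and r: "(\<lambda>N. r N / real N) \<longlonglongrightarrow> 0"
  shows "(\<lambda>N. u N / real N) \<longlonglongrightarrow> C"
proof (rule tendstoI)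
  fix \<epsilon> :: real assume "\<epsilon> > 0"
  then have \<epsilon>: "\<epsilon> / 4 > 0" by simp
  have "\<forall>\<^sub>F k in sequentially. k > 0 \<and> \<bar>c k - C\<bar> < \<epsilon> / 4 \<and> \<bar>e k\<bar> < \<epsilon> / 4"
    using eventually_gt_at_top[of 0] tendstoD[OF c \<epsilon>] tendstoD[OF e \<epsilon>]
    by eventually_elim (auto simp: dist_real_def)
  then obtain k where k: "k > 0" "\<bar>c k - C\<bar> < \<epsilon> / 4" "\<bar>e k\<bar> < \<epsilon> / 4"
    unfolding eventually_sequentially by blast
  have "\<forall>\<^sub>F N in sequentially. N > 0 \<and> \<bar>g k N / real N - c k\<bar> < \<epsilon> / 4 \<and> \<bar>r N / real N\<bar> < \<epsilon> / 4"
    using eventually_gt_at_top[of 0] tendstoD[OF g \<epsilon>] tendstoD[OF r \<epsilon>]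
    by eventually_elim (auto simp: dist_real_def)
  then show "\<forall>\<^sub>F N in sequentially. dist (u N / real N) C < \<epsilon>"
  proof eventually_elim
    case (elim N)
    then have N: "real N > 0" by simp
    have "u N / real N \<le> g k N / real N"
      using lower[of N k] N by (simp add: divide_right_mono)
    moreover have "g k N / real N \<le> (u N + e k * real N + r N) / real N"
      using upper[OF k(1), of N] N by (simp add: divide_right_mono)
    moreover have "(u N + e k * real N + r N) / real N = u N / real N + e k + r N / real N"
      using N by (simp add: add_divide_distrib)
    ultimately show ?case using elim k unfolding dist_real_def abs_less_iff by linarith
  qed
qed

lemma sqfree_Phi_count_density:
  assumes l: "prime l" and S2: "(\<lambda>N. real (card (S2 l (real N))) / real N) \<longlonglongrightarrow> 0"
  shows "(\<lambda>N. real (sqfree_Phi_count l N) / real N) \<longlonglongrightarrow> prodinf (local_factor l)"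
proof (rule tendsto_density_by_approximation[where g = "\<lambda>\<xi> N. real (sieved_Phi_count l \<xi> N)"
      and e = "\<lambda>\<xi>. real l ^ 2 / real \<xi>" and r = "\<lambda>N. real l ^ 2 * real (card (S2 l (real N)))"])
  show "real (sqfree_Phi_count l N) \<le> real (sieved_Phi_count l \<xi> N)" for \<xi> N
    using sqfree_Phi_count_le_sieved[OF l] by simp
  show "real (sieved_Phi_count l \<xi> N)
      \<le> real (sqfree_Phi_count l N) + real l ^ 2 / real \<xi> * real N + real l ^ 2 * real (card (S2 l (real N)))"
    if "\<xi> > 0" for \<xi> N
    using sieved_Phi_count_le[OF l] that by simp
  show "(\<lambda>N. real (sieved_Phi_count l \<xi> N) / real N) \<longlonglongrightarrow> (\<Prod>p\<le>\<xi>. local_factor l p)" for \<xi>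
    unfolding sieved_Phi_count_def by (rule density_squarefree_wrt_small_primes[OF l])
  show "(\<lambda>\<xi>. \<Prod>p\<le>\<xi>. local_factor l p) \<longlonglongrightarrow> prodinf (local_factor l)"
    by (rule convergent_prod_LIMSEQ[OF convergent_prod_local_factor[OF l]])
  show "(\<lambda>\<xi>. real l ^ 2 / real \<xi>) \<longlonglongrightarrow> 0" by (rule lim_const_over_n)
  show "(\<lambda>N. real l ^ 2 * real (card (S2 l (real N))) / real N) \<longlonglongrightarrow> 0"
    using tendsto_mult_right_zero[OF S2, of "real l ^ 2"] by simp
qed

lemma asymp_equiv_at_top_of_density:
  fixes f :: "nat \<Rightarrow> real"
  assumes f: "(\<lambda>N. f N / real N) \<longlonglongrightarrow> C" and "C \<noteq> 0"
  shows "(\<lambda>X::real. f (nat \<lfloor>X\<rfloor>)) \<sim>[at_top] (\<lambda>X. C * X)"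
proof -
  have floor: "filterlim (\<lambda>X::real. nat \<lfloor>X\<rfloor>) sequentially at_top"
    using filterlim_compose[OF filterlim_nat_sequentially filterlim_floor_sequentially] .
  have "((\<lambda>X::real. real (nat \<lfloor>X\<rfloor>) / X) \<longlongrightarrow> 1) at_top" by real_asymp
  then have "((\<lambda>X. f (nat \<lfloor>X\<rfloor>) / real (nat \<lfloor>X\<rfloor>) * (real (nat \<lfloor>X\<rfloor>) / X)) \<longlongrightarrow> C * 1) at_top"
    by (intro tendsto_mult filterlim_compose[OF f floor])
  moreover have "\<forall>\<^sub>F X in at_top. f (nat \<lfloor>X\<rfloor>) / real (nat \<lfloor>X\<rfloor>) * (real (nat \<lfloor>X\<rfloor>) / X) = f (nat \<lfloor>X\<rfloor>) / X"
    using eventually_ge_at_top[of "1::real"]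
  proof eventually_elim
    case (elim X)
    define n where "n = nat \<lfloor>X\<rfloor>"
    have "real n > 0" using elim by (simp add: n_def)
    then show ?case unfolding n_def[symmetric] by simp
  qed
  ultimately have "((\<lambda>X. f (nat \<lfloor>X\<rfloor>) / X) \<longlongrightarrow> C) at_top"
    by (simp add: Lim_transform_eventually)
  then show ?thesis by (rule asymp_equivI'_const) fact
qed

theorem theorem2:
  fixes l :: nat
  assumes "prime l" and "odd l"
    and "(\<lambda>T. real (card (S2 l T))) \<in> o[at_top](\<lambda>T. T)"
  shows "(\<lambda>X::real. real (card {n::nat. 1 \<le> n \<and> real n \<le> X \<and> squarefree (Phi l (int n))}))
           \<sim>[at_top] (\<lambda>X. (\<Prod>p. if prime p then 1 - real (delta l (p^2)) / real (p^2) else 1) * X)"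
proof -
  have "((\<lambda>T. real (card (S2 l T)) / T) \<longlongrightarrow> 0) at_top"
    using smalloD_tendsto[OF assms(3)] .
  then have S2: "(\<lambda>N. real (card (S2 l (real N))) / real N) \<longlonglongrightarrow> 0"
    using filterlim_compose filterlim_real_sequentially by fastforce
  have C: "prodinf (local_factor l) \<noteq> 0"
    using convergent_prod_local_factor[OF assms(1)] local_factor_pos[OF assms(1)]
    by (intro prodinf_nonzero) (auto simp: less_imp_neq[symmetric])
  have "real n \<le> X \<longleftrightarrow> n \<le> nat \<lfloor>X\<rfloor>" if "1 \<le> n" for n :: nat and X :: real
    using that le_floor_iff[of "int n" X] by linarith
  then have "{n. 1 \<le> n \<and> real n \<le> X \<and> squarefree (Phi l (int n))}
      = {n\<in>{1..nat \<lfloor>X\<rfloor>}. squarefree (Phi l (int n))}" for X :: real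
    by auto
  then show ?thesis
    using asymp_equiv_at_top_of_density[OF sqfree_Phi_count_density[OF assms(1) S2] C]
    by (simp add: sqfree_Phi_count_def local_factor_def[abs_def])
qed

end
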